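(* Let $\beta\in(0,\infty)$ and, for each $N\ge1$, let $K=K_N$ be a positive integer with $K_N/N\to\beta$. Let $\boldsymbol{S}\in\mathbb{R}^{N\times K}$ be a random time-hopping matrix with $N_{\mathsf s}=1$: its columns are independent, $\boldsymbol{s}_k=\epsilon_k\boldsymbol{e}_{\pi_k}$ with $\pi_k$ uniform on $\{1,\dots,N\}$ and $\epsilon_k$ uniform on $\{-1,+1\}$, all independent. Then, as $N\to\infty$, \[ r_N:=\frac{1}{N}\operatorname{rank}\boldsymbol{S}\ \xrightarrow{p}\ 1-e^{-\beta}. \]
   Context: $\boldsymbol{e}_i$ denotes the $i$th standard basis vector of $\mathbb{R}^N$; $\xrightarrow{p}$ denotes convergence in probability. *)

theory Defs
  imports "HOL-Probability.Probability" "Jordan_Normal_Form.DL_Rank"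
begin

text \<open>Time-hopping matrix with one nonzero entry per column: column k is
  eps k times the standard basis vector indexed by pi k (indices 0-based).\<close>
definition th_matrix :: "nat \<Rightarrow> nat \<Rightarrow> (nat \<Rightarrow> nat) \<Rightarrow> (nat \<Rightarrow> real) \<Rightarrow> real mat" where
  "th_matrix N K p eps = mat N K (\<lambda>(i, k). if i = p k then eps k else 0)"

definition th_law :: "nat \<Rightarrow> nat \<Rightarrow> (nat \<Rightarrow> nat \<times> real) pmf" where
  "th_law N K = Pi_pmf {..<K} (0, 1)
     (\<lambda>k. pair_pmf (pmf_of_set {..<N}) (pmf_of_set {-1, 1}))"

definition rank_ratio :: "nat \<Rightarrow> nat \<Rightarrow> (nat \<Rightarrow> nat \<times> real) \<Rightarrow> real" where
  "rank_ratio N K w =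
     real (vec_space.rank N (th_matrix N K (\<lambda>k. fst (w k)) (\<lambda>k. snd (w k)))) / real N"

end

theory Submission
  imports Defs "HOL-Real_Asymp.Real_Asymp"
begin

text \<open>The rank of a matrix with exactly one nonzero entry per column is the number of rows
  hit by some column, so \<open>1 - r\<^sub>N\<close> is the fraction \<open>Y/N\<close> of empty rows. A row is empty
  with probability \<open>q = (1 - 1/N)\<^sup>K \<longrightarrow> e\<^sup>-\<^sup>\<beta>\<close>, and two distinct rows are both empty with
  probability \<open>(1 - 2/N)\<^sup>K \<le> q\<^sup>2\<close>. Hence \<open>Var Y \<le> N\<close>, and Chebyshev's inequality gives
  \<open>Y/N - q \<longrightarrow> 0\<close> in probability.\<close>

lemma centered_indicator_mult:
  "(indicator A x - q) * (indicator B x - q)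
     = indicator (A \<inter> B) x - q * indicator A x - q * indicator B x + (q\<^sup>2 :: real)"
  by (auto simp: indicator_def power2_eq_square algebra_simps)

lemma (in prob_space) integrable_centered_indicator_mult:
  fixes q :: real
  assumes "A \<in> events" "B \<in> events"
  shows "integrable M (\<lambda>x. (indicator A x - q) * (indicator B x - q))"
  using assms unfolding centered_indicator_mult by (simp add: less_top[symmetric])

lemma (in prob_space) expectation_centered_indicator_mult:
  fixes q :: real
  assumes "A \<in> events" "B \<in> events"
  shows "expectation (\<lambda>x. (indicator A x - q) * (indicator B x - q))
           = prob (A \<inter> B) - q * prob A - q * prob B + q\<^sup>2"
  using assms unfolding centered_indicator_mult
  by (simp add: less_top[symmetric] prob_space Bochner_Integration.integral_add Bochner_Integration.integral_diff)

lemma square_centered_sum: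
  fixes f :: "'i \<Rightarrow> real" and q :: real
  shows "((\<Sum>i\<in>I. f i) - card I * q)\<^sup>2 = (\<Sum>i\<in>I. \<Sum>j\<in>I. (f i - q) * (f j - q))"
proof -
  have "(\<Sum>i\<in>I. f i) - card I * q = (\<Sum>i\<in>I. f i - q)"
    by (simp add: sum_subtractf)
  then show ?thesis by (simp add: power2_eq_square sum_product)
qed

lemma (in prob_space) integrable_square_centered_count:
  fixes q :: real
  assumes "\<And>i. i \<in> I \<Longrightarrow> A i \<in> events"
  shows "integrable M (\<lambda>x. ((\<Sum>i\<in>I. indicator (A i) x) - card I * q)\<^sup>2)"
  using assms by (simp add: square_centered_sum integrable_centered_indicator_mult)

lemma (in prob_space) second_moment_count_le:
  fixes q :: real
  assumes "finite I" and events: "\<And>i. i \<in> I \<Longrightarrow> A i \<in> events"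
    and marginal: "\<And>i. i \<in> I \<Longrightarrow> prob (A i) = q"
    and pairwise: "\<And>i j. i \<in> I \<Longrightarrow> j \<in> I \<Longrightarrow> i \<noteq> j \<Longrightarrow> prob (A i \<inter> A j) \<le> q\<^sup>2"
  shows "expectation (\<lambda>x. ((\<Sum>i\<in>I. indicator (A i) x) - card I * q)\<^sup>2) \<le> card I"
proof -
  let ?Z = "\<lambda>i x. indicator (A i) x - q :: real"
  have covariance: "expectation (\<lambda>x. ?Z i x * ?Z j x) \<le> (if i = j then 1 else 0)"
    if "i \<in> I" "j \<in> I" for i j
  proof (cases "i = j")
    case True
    have "q \<le> 1" using marginal[OF that(1)] prob_le_1 by metis
    moreover have "0 \<le> q\<^sup>2" by simp
    ultimately have "q - q\<^sup>2 \<le> 1" by linarith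
    then show ?thesis
      using expectation_centered_indicator_mult[OF events[OF that(1)] events[OF that(2)]]
        marginal that True by (simp add: power2_eq_square)
  next
    case False
    then show ?thesis
      using expectation_centered_indicator_mult[OF events[OF that(1)] events[OF that(2)]]
        marginal that pairwise[OF that False] by (simp add: power2_eq_square)
  qed
  have "expectation (\<lambda>x. ((\<Sum>i\<in>I. indicator (A i) x) - card I * q)\<^sup>2)
      = (\<Sum>i\<in>I. \<Sum>j\<in>I. expectation (\<lambda>x. ?Z i x * ?Z j x))"
    using events
    by (simp add: square_centered_sum integrable_centered_indicator_mult Bochner_Integration.integral_sum)
  also have "\<dots> \<le> (\<Sum>i\<in>I. \<Sum>j\<in>I. if i = j then 1 else 0)"
    using covariance by (intro sum_mono) auto
  also have "\<dots> = card I" using \<open>finite I\<close> by simp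
  finally show ?thesis .
qed

lemma (in prob_space) prob_count_deviation_le:
  fixes q d :: real
  assumes "finite I" and events: "\<And>i. i \<in> I \<Longrightarrow> A i \<in> events"
    and marginal: "\<And>i. i \<in> I \<Longrightarrow> prob (A i) = q"
    and pairwise: "\<And>i j. i \<in> I \<Longrightarrow> j \<in> I \<Longrightarrow> i \<noteq> j \<Longrightarrow> prob (A i \<inter> A j) \<le> q\<^sup>2"
    and "d > 0"
  shows "prob {x \<in> space M. d \<le> \<bar>(\<Sum>i\<in>I. indicator (A i) x) - card I * q\<bar>} \<le> card I / d\<^sup>2"
proof -
  let ?u = "\<lambda>x. ((\<Sum>i\<in>I. indicator (A i) x) - card I * q)\<^sup>2"
  have "{x \<in> space M. d \<le> \<bar>(\<Sum>i\<in>I. indicator (A i) x) - card I * q\<bar>} = {x \<in> space M. d\<^sup>2 \<le> ?u x}"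
    using \<open>d > 0\<close> by (auto simp: abs_le_square_iff[symmetric])
  also have "prob \<dots> \<le> expectation ?u / d\<^sup>2"
    using \<open>d > 0\<close>
    by (intro integral_Markov_inequality_measure[where A = "space M"]
        integrable_square_centered_count events) auto
  also have "\<dots> \<le> card I / d\<^sup>2"
    using second_moment_count_le[OF assms(1-4)] by (simp add: divide_right_mono)
  finally show ?thesis .
qed

lemma (in vec_space) rank_eq_card_of_spanning_lin_indpt:
  assumes A: "A \<in> carrier_mat n nc" and S: "S \<subseteq> set (cols A)" "lin_indpt S"
    and spans: "set (cols A) \<subseteq> span S"
  shows "rank A = card S"
proof (rule rank_card_indpt[OF A])
  have cols_carrier: "set (cols A) \<subseteq> carrier_vec n"
    using A cols_dim by blast
  show "maximal S (\<lambda>T. T \<subseteq> set (cols A) \<and> lin_indpt T)"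
    unfolding maximal_def
  proof (intro conjI allI impI S)
    fix T assume T: "S \<subseteq> T \<and> T \<subseteq> set (cols A) \<and> lin_indpt T"
    show "T = S"
    proof (rule ccontr)
      assume "T \<noteq> S"
      with T obtain x where x: "x \<in> T" "x \<notin> S" by auto
      have "lin_dep (S \<union> {x})"
        using lin_dep_iff_in_span[of S x] S cols_carrier spans x T by auto
      then have "lin_dep T"
        by (rule supset_ld_is_ld) (use T x in auto)
      with T show False by simp
    qed
  qed
qed

lemma (in vec_space) lin_indpt_scaled_unit_vecs:
  assumes P: "P \<subseteq> {..<n}" and nonzero: "\<And>i. i \<in> P \<Longrightarrow> c i \<noteq> 0"
  shows "lin_indpt ((\<lambda>i. c i \<cdot>\<^sub>v unit_vec n i) ` P)"
proof
  let ?v = "\<lambda>i. c i \<cdot>\<^sub>v unit_vec n i" let ?S = "?v ` P"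
  have fin: "finite ?S" using P finite_subset by blast
  have carrier: "?S \<subseteq> carrier_vec n" by auto
  assume "lin_dep ?S"
  from finite_lin_dep[OF fin this carrier] obtain a v where
    zero: "lincomb a ?S = 0\<^sub>v n" and v: "v \<in> ?S" and av: "a v \<noteq> 0" by auto
  from v obtain i where i: "i \<in> P" and vi: "v = ?v i" by auto
  have i_n: "i < n" using i P by auto
  have others: "w $ i = 0" if "w \<in> ?S - {v}" for w
  proof -
    from that vi obtain j where "w = ?v j" "j \<noteq> i" by auto
    then show ?thesis using i_n by (simp add: unit_vec_def)
  qed
  have "lincomb a ?S $ i = (\<Sum>w\<in>?S. a w * w $ i)"
    using lincomb_index[OF i_n carrier] .
  also have "\<dots> = a v * v $ i"
    using sum.remove[OF fin v, of "\<lambda>w. a w * w $ i"] others by simp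
  also have "\<dots> = a v * c i"
    using vi i_n by simp
  finally have "a v * c i = 0" using zero i_n by simp
  with av nonzero[OF i] show False by simp
qed

lemma inj_on_scaled_unit_vecs:
  assumes P: "P \<subseteq> {..<n}" and nonzero: "\<And>i. i \<in> P \<Longrightarrow> c i \<noteq> (0 :: 'a :: semiring_1)"
  shows "inj_on (\<lambda>i. c i \<cdot>\<^sub>v unit_vec n i) P"
proof (rule inj_onI)
  fix i j assume ij: "i \<in> P" "j \<in> P" "c i \<cdot>\<^sub>v unit_vec n i = c j \<cdot>\<^sub>v unit_vec n j"
  have "i < n" using ij(1) P by auto
  then have "c i = (if i = j then c j else 0)"
    using arg_cong[OF ij(3), of "\<lambda>v. v $ i"] by (simp add: unit_vec_def)
  then show "i = j" using nonzero[OF ij(1)] by (auto split: if_splits)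
qed

lemma (in vec_space) rank_one_entry_per_column:
  assumes rows: "\<And>k. k < K \<Longrightarrow> p k < n" and nonzero: "\<And>k. k < K \<Longrightarrow> e k \<noteq> 0"
  shows "rank (mat n K (\<lambda>(i, k). if i = p k then e k else 0)) = card (p ` {..<K})"
proof -
  define A where "A = mat n K (\<lambda>(i, k). if i = p k then e k else 0)"
  define P where "P = p ` {..<K}"
  have col_A: "col A k = e k \<cdot>\<^sub>v unit_vec n (p k)" if "k < K" for k
    using that unfolding A_def by (auto simp: unit_vec_def)
  have cols_A: "set (cols A) = col A ` {..<K}"
    unfolding A_def cols_def by auto
  define r where "r i = (SOME k. k < K \<and> p k = i)" for i
  have r: "r i < K \<and> p (r i) = i" if "i \<in> P" for i
  proof -
    from that obtain k where "k < K \<and> p k = i" unfolding P_def by auto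
    then show ?thesis unfolding r_def by (rule someI)
  qed
  \<comment> \<open>one column per hit row; every other column is a multiple of one of these\<close>
  define S where "S = (\<lambda>i. e (r i) \<cdot>\<^sub>v unit_vec n i) ` P"
  have P_n: "P \<subseteq> {..<n}" using rows unfolding P_def by auto
  have S_carrier: "S \<subseteq> carrier_vec n" unfolding S_def by auto
  have S_cols: "S \<subseteq> set (cols A)"
    unfolding S_def cols_A using r col_A by (force simp: image_iff)
  have S_indpt: "lin_indpt S"
    unfolding S_def using P_n nonzero r by (intro lin_indpt_scaled_unit_vecs) auto
  have "col A k \<in> span S" if "k < K" for k
  proof -
    let ?i = "p k"
    have i: "?i \<in> P" using that unfolding P_def by auto
    have "col A k = (e k / e (r ?i)) \<cdot>\<^sub>v (e (r ?i) \<cdot>\<^sub>v unit_vec n ?i)"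
      using col_A[OF that] nonzero[OF that] nonzero r[OF i] by (simp add: smult_smult_assoc)
    also have "\<dots> \<in> span S"
      using i S_carrier unfolding S_def by (intro smult_in_span span_mem) auto
    finally show ?thesis .
  qed
  then have spans: "set (cols A) \<subseteq> span S" unfolding cols_A by auto
  have "inj_on (\<lambda>i. e (r i) \<cdot>\<^sub>v unit_vec n i) P"
    using P_n nonzero r by (intro inj_on_scaled_unit_vecs) auto
  then have "card S = card P" unfolding S_def by (rule card_image)
  moreover have "rank A = card S"
    by (rule rank_eq_card_of_spanning_lin_indpt[OF _ S_cols S_indpt spans, of K]) (simp add: A_def)
  ultimately show ?thesis unfolding A_def P_def by simp
qed

lemma th_law_support:
  assumes "N \<ge> 1" "w \<in> set_pmf (th_law N K)" "k < K"
  shows "fst (w k) < N" "snd (w k) \<in> {-1, 1}"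
proof -
  have "{..<N} \<noteq> {}" using assms(1) by (simp add: lessThan_empty_iff)
  then show "fst (w k) < N" "snd (w k) \<in> {-1, 1}"
    using assms(2,3) by (auto simp: th_law_def set_Pi_pmf PiE_dflt_def set_pair_pmf)
qed

lemma prob_th_law_rows_avoided:
  assumes "N \<ge> 1"
  shows "measure_pmf.prob (th_law N K) (Pi {..<K} (\<lambda>k. {z. fst z \<notin> R}))
           = (card ({..<N} - R) / N) ^ K"
proof -
  have "{..<N} \<noteq> {}" using assms by (simp add: lessThan_empty_iff)
  then have "measure_pmf.prob (pair_pmf (pmf_of_set {..<N}) (pmf_of_set {-1, 1::real}))
               {z. fst z \<notin> R} = card ({..<N} - R) / N"
    using measure_map_pmf[of fst "pair_pmf (pmf_of_set {..<N}) (pmf_of_set {-1, 1::real})" "- R"]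
      measure_pmf_of_set[of "{..<N}" "- R"]
    by (simp add: map_fst_pair_pmf vimage_def Diff_eq)
  then show ?thesis
    unfolding th_law_def by (simp add: measure_Pi_pmf_Pi)
qed

definition unhit_row :: "nat \<Rightarrow> nat \<Rightarrow> (nat \<Rightarrow> nat \<times> real) set" where
  "unhit_row K i = Pi {..<K} (\<lambda>k. {z. fst z \<noteq> i})"

lemma rank_ratio_eq_one_minus_unhit_rows:
  assumes N: "N \<ge> 1" and w: "w \<in> set_pmf (th_law N K)"
  shows "rank_ratio N K w = 1 - (\<Sum>i<N. indicator (unhit_row K i) w) / N"
proof -
  define hit where "hit = (\<lambda>k. fst (w k)) ` {..<K}"
  have hit_N: "hit \<subseteq> {..<N}" using th_law_support[OF N w] unfolding hit_def by auto
  have "vec_space.rank N (th_matrix N K (\<lambda>k. fst (w k)) (\<lambda>k. snd (w k))) = card hit"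
    unfolding th_matrix_def hit_def
  proof (intro vec_space.rank_one_entry_per_column)
    fix k assume "k < K"
    then show "fst (w k) < N" "snd (w k) \<noteq> 0"
      using th_law_support[OF N w] by force+
  qed
  moreover have "(\<Sum>i<N. indicator (unhit_row K i) w) = real (card ({..<N} - hit))"
  proof -
    have "{..<N} \<inter> {i. w \<in> unhit_row K i} = {..<N} - hit"
      unfolding unhit_row_def hit_def by auto
    then show ?thesis
      by (simp add: indicator_def sum.If_cases)
  qed
  moreover have "card ({..<N} - hit) = N - card hit" "card hit \<le> N"
    using hit_N by (auto simp: card_Diff_subset finite_subset card_mono[of "{..<N}", simplified])
  ultimately show ?thesis
    unfolding rank_ratio_def using N by (simp add: of_nat_diff field_simps)
qed

lemma unhit_row_Int:
  "unhit_row K i \<inter> unhit_row K j = Pi {..<K} (\<lambda>k. {z. fst z \<notin> {i, j}})"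
  unfolding unhit_row_def by auto

lemma prob_unhit_rows_deviation_le:
  assumes N: "N \<ge> 1" and "d > 0"
  shows "measure_pmf.prob (th_law N K)
           {w. d \<le> \<bar>(\<Sum>i<N. indicator (unhit_row K i) w) - real N * ((real N - 1) / real N) ^ K\<bar>} \<le> N / d\<^sup>2"
proof -
  define q :: real where "q = ((real N - 1) / real N) ^ K"
  have marginal: "measure_pmf.prob (th_law N K) (unhit_row K i) = q" if "i < N" for i
  proof -
    have "unhit_row K i = Pi {..<K} (\<lambda>k. {z. fst z \<notin> {i}})"
      unfolding unhit_row_def by auto
    moreover have "card ({..<N} - {i}) = N - 1" using that by simp
    ultimately show ?thesis
      unfolding q_def using N by (simp only: prob_th_law_rows_avoided) (simp add: of_nat_diff)
  qed
  have pairwise: "measure_pmf.prob (th_law N K) (unhit_row K i \<inter> unhit_row K j) \<le> q\<^sup>2"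
    if "i < N" "j < N" "i \<noteq> j" for i j
  proof -
    have "card ({..<N} - {i, j}) = N - 2" "N \<ge> 2"
      using that by (auto simp: card_Diff_subset)
    then have "measure_pmf.prob (th_law N K) (unhit_row K i \<inter> unhit_row K j) = ((real N - 2) / real N) ^ K"
      unfolding unhit_row_Int prob_th_law_rows_avoided[OF N] by (simp add: of_nat_diff)
    also have "\<dots> \<le> (((real N - 1) / real N)\<^sup>2) ^ K"
      using \<open>N \<ge> 2\<close> by (intro power_mono) (auto simp: field_simps power2_eq_square)
    also have "\<dots> = q\<^sup>2"
      unfolding q_def by (simp add: power_mult[symmetric] mult.commute)
    finally show ?thesis .
  qed
  show ?thesis
    using measure_pmf.prob_count_deviation_le[where I = "{..<N}" and A = "unhit_row K" and q = q and d = d]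
      marginal pairwise \<open>d > 0\<close> by (simp add: q_def)
qed

lemma tendsto_power_one_minus_inverse:
  fixes K :: "nat \<Rightarrow> nat"
  assumes "(\<lambda>N. real (K N) / real N) \<longlonglongrightarrow> \<beta>"
  shows "(\<lambda>N. ((real N - 1) / real N) ^ K N) \<longlonglongrightarrow> exp (- \<beta>)"
proof -
  have identity:
    "exp (real (K N) / real N * (real N * ln (1 - 1 / real N))) = ((real N - 1) / real N) ^ K N"
    if "N \<ge> 2" for N
  proof -
    have base: "(real N - 1) / real N = 1 - 1 / real N" "0 < 1 - 1 / real N"
      using that by (auto simp: field_simps)
    have "exp (real (K N) / real N * (real N * ln (1 - 1 / real N)))
        = exp (real (K N) * ln (1 - 1 / real N))"
      using that by simp
    also have "\<dots> = exp (ln ((1 - 1 / real N) ^ K N))"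
      using base by (simp add: ln_realpow)
    also have "\<dots> = ((real N - 1) / real N) ^ K N"
      using base by simp
    finally show ?thesis .
  qed
  have "(\<lambda>N::nat. real N * ln (1 - 1 / real N)) \<longlonglongrightarrow> -1" by real_asymp
  from tendsto_exp[OF tendsto_mult[OF assms this], unfolded mult_minus1_right]
  show ?thesis
    by (rule Lim_transform_eventually) (rule eventually_mono[OF eventually_ge_at_top[of 2] identity])
qed

lemma prob_rank_ratio_far_le:
  assumes N: "N \<ge> 1" and "e > 0" and close: "\<bar>((real N - 1) / real N) ^ K - c\<bar> \<le> e / 2"
  shows "measure_pmf.prob (th_law N K) {w. \<bar>rank_ratio N K w - (1 - c)\<bar> > e} \<le> 4 / (e\<^sup>2 * N)"
proof -
  let ?M = "th_law N K"
  let ?q = "((real N - 1) / real N) ^ K"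
  let ?Y = "\<lambda>w. \<Sum>i<N. indicator (unhit_row K i) w :: real"
  let ?far = "{w. \<bar>rank_ratio N K w - (1 - c)\<bar> > e}"
  let ?dev = "{w. e / 2 * N \<le> \<bar>?Y w - real N * ?q\<bar>}"
  have "?far \<inter> set_pmf ?M \<subseteq> ?dev"
  proof
    fix w assume w: "w \<in> ?far \<inter> set_pmf ?M"
    then have "e < \<bar>?Y w / N - c\<bar>"
      using rank_ratio_eq_one_minus_unhit_rows[OF N] by auto
    then have "e / 2 < \<bar>?Y w / N - ?q\<bar>"
      using close by linarith
    then have "e / 2 * N \<le> \<bar>?Y w / N - ?q\<bar> * N"
      using N by simp
    also have "\<dots> = \<bar>(?Y w / N - ?q) * N\<bar>"
      by (simp add: abs_mult)
    also have "(?Y w / N - ?q) * N = ?Y w - real N * ?q"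
      using N by (simp add: field_simps)
    finally show "w \<in> ?dev" by simp
  qed
  then have "measure_pmf.prob ?M ?far \<le> measure_pmf.prob ?M ?dev"
    by (subst measure_Int_set_pmf[symmetric]) (rule measure_pmf.finite_measure_mono, auto)
  also have "\<dots> \<le> N / (e / 2 * N)\<^sup>2"
    using N \<open>e > 0\<close> by (intro prob_unhit_rows_deviation_le) auto
  also have "\<dots> = 4 / (e\<^sup>2 * N)"
    using N by (simp add: power2_eq_square field_simps)
  finally show ?thesis .
qed

theorem corollary2:
  fixes \<beta> :: real and K :: "nat \<Rightarrow> nat"
  assumes "\<beta> > 0"
    and "\<And>N. N \<ge> 1 \<Longrightarrow> K N \<ge> 1"
    and "(\<lambda>N. real (K N) / real N) \<longlonglongrightarrow> \<beta>"
  shows "\<forall>e>0. (\<lambda>N. measure_pmf.prob (th_law N (K N))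
            {w. \<bar>rank_ratio N (K N) w - (1 - exp (- \<beta>))\<bar> > e}) \<longlonglongrightarrow> 0"
proof (intro allI impI)
  fix e :: real assume "e > 0"
  then have "e / 2 > 0" by simp
  then have "eventually (\<lambda>N. dist (((real N - 1) / real N) ^ K N) (exp (- \<beta>)) < e / 2) sequentially"
    by (rule tendsto_power_one_minus_inverse[OF assms(3), unfolded tendsto_iff, rule_format])
  then have bound: "eventually (\<lambda>N. measure_pmf.prob (th_law N (K N))
      {w. \<bar>rank_ratio N (K N) w - (1 - exp (- \<beta>))\<bar> > e} \<le> 4 / (e\<^sup>2 * N)) sequentially"
    using eventually_ge_at_top[of "1::nat"]
  proof eventually_elim
    case (elim N)
    then show ?case
      using \<open>e > 0\<close> by (intro prob_rank_ratio_far_le) (auto simp: dist_real_def)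
  qed
  have "(\<lambda>N. 4 / (e\<^sup>2 * real N)) \<longlonglongrightarrow> 0"
    using \<open>e > 0\<close> by real_asymp
  from tendsto_sandwich[OF _ bound tendsto_const this]
  show "(\<lambda>N. measure_pmf.prob (th_law N (K N))
      {w. \<bar>rank_ratio N (K N) w - (1 - exp (- \<beta>))\<bar> > e}) \<longlonglongrightarrow> 0"
    by simp
qed

end
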